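(* Let $N\geq3$ and let $(M,g)$ be an $N$-dimensional Riemannian model with pole $o$ and metric $ds^2=dr^2+\psi^2(r)\,d\omega^2$, where $\psi$ is a $C^\infty$ nonnegative function on $[0,+\infty)$, positive on $(0,+\infty)$, with $\psi'(0)=1$, $\psi^{(2k)}(0)=0$ for all $k\geq0$, and such that $\psi(r)=A\,r\,e^{br^{a+1}}$ for $r\geq R$, for some $R,A,b>0$ and $a\geq-1$. Then for all $u\in C_c^\infty(M\setminus B_R(o))$, $$\int_M\Big(\frac{\partial u}{\partial r}\Big)^2dv_g\geq\frac{(N-2)^2}{4}\int_M\frac{u^2}{r^2}dv_g+\frac{(a+1)^2b^2(N-1)^2}{4}\int_M r^{2a}u^2dv_g+\frac{b(a+1)(N-1)(N-1+a)}{2}\int_M r^{a-1}u^2dv_g.$$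
   Context: $d\omega^2$ is the standard metric on $\mathbb{S}^{N-1}$, $r$ the geodesic distance from $o$, $B_R(o)$ the geodesic ball of radius $R$ centered at $o$, $\frac{\partial u}{\partial r}$ the radial derivative, $dv_g$ the Riemannian volume. *)

theory Defs
  imports "HOL-Analysis.Analysis"
begin

fun Ck :: "nat \<Rightarrow> ('a::euclidean_space \<Rightarrow> real) \<Rightarrow> bool" where
  "Ck 0 f = continuous_on UNIV f"
| "Ck (Suc k) f = ((\<forall>x. f differentiable (at x)) \<and>
      (\<forall>i\<in>Basis. Ck k (\<lambda>x. frechet_derivative f (at x) i)))"

definition smooth :: "('a::euclidean_space \<Rightarrow> real) \<Rightarrow> bool" where
  "smooth f \<longleftrightarrow> (\<forall>k. Ck k f)"

definition smooth_derivs_nonneg :: "(real \<Rightarrow> real) \<Rightarrow> (nat \<Rightarrow> real \<Rightarrow> real) \<Rightarrow> bool" where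
  "smooth_derivs_nonneg \<psi> d \<longleftrightarrow> (\<forall>x\<ge>0. d 0 x = \<psi> x) \<and>
     (\<forall>k. \<forall>x\<ge>0. (d k has_real_derivative d (Suc k) x) (at x within {0..}))"

text \<open>Model manifold identified with R^N via polar coordinates about the pole:
  r = norm x, dv_g = (psi(r)/r)^(N-1) dx, radial derivative = Du(x)(x/|x|).\<close>
definition model_weight :: "(real \<Rightarrow> real) \<Rightarrow> real ^ 'n \<Rightarrow> real" where
  "model_weight \<psi> x = (\<psi> (norm x) / norm x) ^ (CARD('n) - 1)"

definition radial_deriv :: "(real ^ 'n \<Rightarrow> real) \<Rightarrow> real ^ 'n \<Rightarrow> real" where
  "radial_deriv u x = frechet_derivative u (at x) (x /\<^sub>R norm x)"

end

theory Submission
  imports Defs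
begin

(* Write r = |x| and let W(r) = A^(N-1) exp((N-1) b r^(a+1)), which equals the density (psi(r)/r)^(N-1)
   on the support of u, and F(r) = (N-2)/(2r) + beta r^a with beta = (N-1) b (a+1)/2.
   Expanding 0 <= W (u_r + F u)^2 and integrating the cross term 2 F W u u_r by parts in r
   gives  int u_r^2 W >= int ((F W)' + (N-1) F W / r - F^2 W) u^2,  and since W' = 2 beta r^a W
   the potential on the right is exactly (N-2)^2/(4 r^2) + beta^2 r^(2a) + beta (N-1+a) r^(a-1).
   The radial integration by parts is the identity  int grad h . x = -N int h  for compactly
   supported C^1 functions h, obtained by differentiating  l |-> int h(l x) dx = l^(-N) int h  at l = 1.
   Because u vanishes on B_R, only the tail of psi matters: N >= 3 and the behaviour of psi near 0
   are not used. *)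

lemma gderiv_eq_0_if_vanishing_on_open:
  assumes "GDERIV f x :> D" and "open S" "x \<in> S" "\<And>y. y \<in> S \<Longrightarrow> f y = 0"
  shows "D = 0"
proof -
  have "FDERIV f x :> (\<lambda>_. 0)"
    by (rule has_derivative_transform_within_open[of "\<lambda>_. 0" _ _ _ S]) (use assms in auto)
  then have "(\<lambda>v. v \<bullet> D) = (\<lambda>_. 0)"
    using assms(1) has_derivative_unique unfolding gderiv_def by blast
  then show ?thesis
    by (metis inner_eq_zero_iff)
qed

lemma has_integral_cbox_iff_UNIV:
  fixes f :: "'a::euclidean_space \<Rightarrow> 'b::banach"
  assumes "\<And>x. r < norm x \<Longrightarrow> f x = 0"
  shows "(f has_integral I) (cbox (- (r *\<^sub>R One)) (r *\<^sub>R One)) \<longleftrightarrow> (f has_integral I) UNIV"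
proof -
  have "f x = 0" if outside: "x \<notin> cbox (- (r *\<^sub>R One)) (r *\<^sub>R One)" for x
  proof -
    obtain i where "i \<in> Basis" "\<not> (- r \<le> x \<bullet> i \<and> x \<bullet> i \<le> r)"
      using outside by (auto simp: mem_box inner_minus_left)
    then have "r < norm x"
      using Basis_le_norm[of i x] by linarith
    then show ?thesis
      using assms by blast
  qed
  then have "(\<lambda>x. if x \<in> cbox (- (r *\<^sub>R One)) (r *\<^sub>R One) then f x else 0) = f"
    by auto
  then show ?thesis
    by (metis has_integral_restrict_UNIV)
qed

lemma integral_cbox_dilation:
  fixes h :: "'a::euclidean_space \<Rightarrow> real"
  assumes h_cont: "continuous_on UNIV h" and supp: "\<And>x. M < norm x \<Longrightarrow> h x = 0"
    and l: "0 < l" and M_le: "M < l * r"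
  shows "integral (cbox (- (r *\<^sub>R One)) (r *\<^sub>R One)) (\<lambda>x. h (l *\<^sub>R x)) = integral UNIV h / l ^ DIM('a)"
proof -
  have "h integrable_on cbox (- (M *\<^sub>R One)) (M *\<^sub>R One)"
    by (rule integrable_continuous[OF continuous_on_subset[OF h_cont]]) simp
  then obtain I where I: "(h has_integral I) (cbox (- (M *\<^sub>R One)) (M *\<^sub>R One))"
    by (auto simp: integrable_on_def)
  then have "((\<lambda>x. h (l *\<^sub>R x)) has_integral I / l ^ DIM('a)) (cbox (- ((M / l) *\<^sub>R One)) ((M / l) *\<^sub>R One))"
    using has_integral_affinity_iff[OF l, of h 0 I "- (M *\<^sub>R One)" "M *\<^sub>R One"]
    by (simp add: divide_inverse_commute)
  moreover have "h (l *\<^sub>R x) = 0" if "M / l < norm x" for x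
    using that l supp by (simp add: field_simps)
  ultimately have "((\<lambda>x. h (l *\<^sub>R x)) has_integral I / l ^ DIM('a)) UNIV"
    using has_integral_cbox_iff_UNIV[of "M / l" "\<lambda>x. h (l *\<^sub>R x)"] by blast
  moreover have "h (l *\<^sub>R x) = 0" if "r < norm x" for x
  proof -
    have "M < l * norm x"
      using mult_strict_left_mono[OF that l] M_le by linarith
    then show ?thesis
      using l supp[of "l *\<^sub>R x"] by simp
  qed
  moreover have "integral UNIV h = I"
    using I has_integral_cbox_iff_UNIV[of M h I] supp by (blast intro: integral_unique)
  ultimately show ?thesis
    using has_integral_cbox_iff_UNIV[of r "\<lambda>x. h (l *\<^sub>R x)"] by (blast intro: integral_unique)
qed

lemma has_field_derivative_integral_dilation:
  fixes h :: "'a::euclidean_space \<Rightarrow> real"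
  assumes deriv: "\<And>x. GDERIV h x :> H x" and H_cont: "continuous_on UNIV H"
  shows "((\<lambda>l. integral (cbox a b) (\<lambda>x. h (l *\<^sub>R x))) has_field_derivative
      integral (cbox a b) (\<lambda>x. H x \<bullet> x)) (at 1)"
proof -
  define U :: "real set" where "U = {0<..<2}"
  have h_cont: "continuous_on UNIV h"
    using deriv unfolding gderiv_def
    by (meson continuous_at_imp_continuous_on has_derivative_continuous)
  have "((\<lambda>l. integral (cbox a b) (\<lambda>x. h (l *\<^sub>R x))) has_field_derivative
      integral (cbox a b) (\<lambda>x. H (1 *\<^sub>R x) \<bullet> x)) (at 1 within U)"
  proof (rule leibniz_rule_field_derivative[where fx = "\<lambda>l x. H (l *\<^sub>R x) \<bullet> x"])
    fix l and x :: 'a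
    have "((\<lambda>l. h (l *\<^sub>R x)) has_derivative (\<lambda>v. v \<bullet> H (l *\<^sub>R x)) \<circ> (\<lambda>t. t *\<^sub>R x)) (at l within U)"
      using deriv unfolding gderiv_def
      by (intro has_derivative_compose[of "\<lambda>l. l *\<^sub>R x", unfolded o_def, folded o_def])
        (auto intro!: derivative_eq_intros)
    then show "((\<lambda>l. h (l *\<^sub>R x)) has_field_derivative H (l *\<^sub>R x) \<bullet> x) (at l within U)"
      unfolding has_field_derivative_def
      by (rule has_derivative_eq_rhs) (auto simp: fun_eq_iff inner_commute)
  next
    show "(\<lambda>x. h (l *\<^sub>R x)) integrable_on cbox a b" for l
      by (intro integrable_continuous continuous_on_compose2[OF h_cont]) (auto intro!: continuous_intros)
    show "continuous_on (U \<times> cbox a b) (\<lambda>(l, x). H (l *\<^sub>R x) \<bullet> x)"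
      by (auto intro!: continuous_intros continuous_on_compose2[OF H_cont] simp: split_beta)
    show "1 \<in> U" "convex U"
      by (auto simp: U_def)
  qed
  then show ?thesis
    by (simp add: U_def at_within_open[of 1 "{0<..<2::real}"])
qed

lemma integral_gradient_inner_self:
  fixes h :: "'a::euclidean_space \<Rightarrow> real"
  assumes deriv: "\<And>x. GDERIV h x :> H x" and H_cont: "continuous_on UNIV H"
    and M: "0 < M" and supp: "\<And>x. M < norm x \<Longrightarrow> h x = 0"
  shows "integral UNIV (\<lambda>x. H x \<bullet> x) = - real DIM('a) * integral UNIV h"
proof -
  define T :: "'a set" where "T = cbox (- ((2 * M) *\<^sub>R One)) ((2 * M) *\<^sub>R One)"
  define I where "I = integral UNIV h"
  have h_cont: "continuous_on UNIV h"
    using deriv unfolding gderiv_def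
    by (meson continuous_at_imp_continuous_on has_derivative_continuous)
  have dilated: "integral T (\<lambda>x. h (l *\<^sub>R x)) = I / l ^ DIM('a)" if "1 / 2 < l" for l
  proof -
    have "M < l * (2 * M)"
      using mult_strict_right_mono[OF that, of "2 * M"] M by linarith
    then show ?thesis
      unfolding T_def I_def using that by (intro integral_cbox_dilation[OF h_cont supp]) simp_all
  qed
  have "((\<lambda>l. I / l ^ DIM('a)) has_field_derivative - real DIM('a) * I) (at 1)"
    by (auto intro!: derivative_eq_intros)
  then have "((\<lambda>l. integral T (\<lambda>x. h (l *\<^sub>R x))) has_field_derivative - real DIM('a) * I) (at 1)"
    by (rule has_field_derivative_transform_within_open[where S = "{1/2<..}"]) (simp_all add: dilated)
  then have "integral T (\<lambda>x. H x \<bullet> x) = - real DIM('a) * I"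
    unfolding T_def by (rule DERIV_unique[OF has_field_derivative_integral_dilation[OF deriv H_cont]])
  moreover have "integral UNIV (\<lambda>x. H x \<bullet> x) = integral T (\<lambda>x. H x \<bullet> x)"
  proof -
    have "H x = 0" if "M < norm x" for x
      by (rule gderiv_eq_0_if_vanishing_on_open[OF deriv, of "- cball 0 M"]) (use that supp in auto)
    then have vanish: "H x \<bullet> x = 0" if "2 * M < norm x" for x
      using that M by simp
    have "(\<lambda>x. H x \<bullet> x) integrable_on T"
      unfolding T_def by (intro integrable_continuous continuous_intros continuous_on_subset[OF H_cont]) auto
    then have "((\<lambda>x. H x \<bullet> x) has_integral integral T (\<lambda>x. H x \<bullet> x)) T"
      by (rule integrable_integral)
    then show ?thesis
      unfolding T_def by (intro integral_unique has_integral_cbox_iff_UNIV[OF vanish, THEN iffD1])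
  qed
  ultimately show ?thesis
    by (simp add: I_def)
qed

lemma integrable_lborel_supported_in_annulus:
  fixes f :: "'a::euclidean_space \<Rightarrow> real"
  assumes "continuous_on (- {0}) f" and "0 < \<rho>"
    and "\<And>x. norm x < \<rho> \<or> M < norm x \<Longrightarrow> f x = 0"
  shows "integrable lborel f"
proof -
  define K where "K = cball (0::'a) M - ball 0 \<rho>"
  have "compact K"
    unfolding K_def by (intro compact_diff compact_cball open_ball)
  moreover have "K \<subseteq> - {0}"
    using assms(2) by (auto simp: K_def)
  ultimately have "integrable lborel (\<lambda>x. indicator K x *\<^sub>R f x)"
    by (intro borel_integrable_compact continuous_on_subset[OF assms(1)])
  also have "(\<lambda>x. indicator K x *\<^sub>R f x) = f"
    using assms(3) by (force simp: K_def indicator_def)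
  finally show ?thesis .
qed

lemma continuous_on_compose_norm:
  "continuous_on {0<..} f \<Longrightarrow> continuous_on (- {0}) (\<lambda>x::'a::real_normed_vector. f (norm x))"
  by (rule continuous_on_compose2[of "{0<..}" f]) (auto intro: continuous_intros)

lemma integral_le_of_le_plus_null:
  fixes f g p :: "'a \<Rightarrow> real"
  assumes "integrable M f" "integrable M g" "integrable M p" and "integral\<^sup>L M p = 0"
    and "\<And>x. x \<in> space M \<Longrightarrow> f x \<le> g x + p x"
  shows "integral\<^sup>L M f \<le> integral\<^sup>L M g"
proof -
  have "integral\<^sup>L M f \<le> (\<integral>x. g x + p x \<partial>M)"
    using assms by (intro Bochner_Integration.integral_mono) auto
  also have "\<dots> = integral\<^sup>L M g"
    using assms by simp
  finally show ?thesis .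
qed

lemma power_ansatz_potential:
  fixes r n a \<beta> w :: real
  assumes "0 < r"
  defines "\<alpha> \<equiv> (n - 2) / 2"
  shows "((- \<alpha> / r\<^sup>2 + \<beta> * a * r powr (a - 1)) + (n - 1) * (\<alpha> / r + \<beta> * r powr a) / r
        - (\<alpha> / r + \<beta> * r powr a)\<^sup>2) * w + (\<alpha> / r + \<beta> * r powr a) * (w * (2 * \<beta> * r powr a))
    = \<alpha>\<^sup>2 * (w / r\<^sup>2) + \<beta>\<^sup>2 * (r powr (2 * a) * w) + \<beta> * (n - 1 + a) * (r powr (a - 1) * w)"
proof -
  define p where "p = r powr a"
  have "r powr (a - 1) = p / r" "r powr (2 * a) = p\<^sup>2"
    using assms(1) by (simp_all add: p_def powr_diff powr_add[symmetric] power2_eq_square)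
  then show ?thesis
    using assms(1) unfolding \<alpha>_def by (simp flip: p_def) (simp add: field_simps power2_eq_square)
qed

lemma radial_square_completion:
  fixes r w w' f f' U G n :: real
  assumes "0 < r" "0 \<le> w"
  shows "((f' + (n - 1) * f / r - f\<^sup>2) * w + f * w') * U\<^sup>2
    \<le> (G / r)\<^sup>2 * w + (2 * (f * w) * U * (G / r) + ((f * w' + f' * w) + (n - 1) * (f * w) / r) * U\<^sup>2)"
proof -
  have "(G / r)\<^sup>2 * w + (2 * (f * w) * U * (G / r) + ((f * w' + f' * w) + (n - 1) * (f * w) / r) * U\<^sup>2)
      - ((f' + (n - 1) * f / r - f\<^sup>2) * w + f * w') * U\<^sup>2 = w * (G / r + f * U)\<^sup>2"
    using assms(1) by (simp add: field_simps power2_eq_square)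
  then show ?thesis
    using assms(2) by (metis diff_ge_0_iff_ge zero_le_mult_iff zero_le_power2)
qed

locale C1_supported_off_ball =
  fixes u :: "'a::euclidean_space \<Rightarrow> real" and g :: "'a \<Rightarrow> 'a" and \<rho> :: real
  assumes gderiv: "\<And>x. GDERIV u x :> g x" and gradient_cont: "continuous_on UNIV g"
    and radius_pos: "0 < \<rho>" and vanishes_in_ball: "\<And>x. norm x < \<rho> \<Longrightarrow> u x = 0"
    and bounded_support: "bounded {x. u x \<noteq> 0}"
begin

lemma continuous: "continuous_on UNIV u"
  using gderiv unfolding gderiv_def
  by (meson continuous_at_imp_continuous_on has_derivative_continuous)

lemma vanishes_outside_annulus:
  obtains M where "0 < M" "\<And>x. norm x < \<rho> \<or> M < norm x \<Longrightarrow> u x = 0 \<and> g x = 0"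
proof -
  obtain M where "\<And>x. u x \<noteq> 0 \<Longrightarrow> norm x \<le> M"
    using bounded_support unfolding bounded_iff by auto
  then have u_outer: "u x = 0" if "M < norm x" for x
    using that by force
  have "g x = 0" if "norm x < \<rho>" for x
    by (rule gderiv_eq_0_if_vanishing_on_open[OF gderiv, of "ball 0 \<rho>"])
      (use that vanishes_in_ball in auto)
  moreover have "g x = 0" if "max M \<rho> < norm x" for x
    by (rule gderiv_eq_0_if_vanishing_on_open[OF gderiv, of "- cball 0 (max M \<rho>)"])
      (use that u_outer in auto)
  ultimately show ?thesis
    using that[of "max M \<rho>"] radius_pos vanishes_in_ball u_outer by force
qed

lemma integrable_if_vanishes_with:
  fixes f :: "'a \<Rightarrow> real"
  assumes "continuous_on (- {0}) f" and "\<And>x. u x = 0 \<Longrightarrow> g x = 0 \<Longrightarrow> f x = 0"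
  shows "integrable lborel f"
proof -
  obtain M where "\<And>x. norm x < \<rho> \<or> M < norm x \<Longrightarrow> u x = 0 \<and> g x = 0"
    using vanishes_outside_annulus by blast
  then show ?thesis
    using assms by (intro integrable_lborel_supported_in_annulus[OF _ radius_pos]) auto
qed

lemma gderiv_square_mult_radial:
  fixes k k' :: "real \<Rightarrow> real"
  assumes k_deriv: "\<And>r. 0 < r \<Longrightarrow> (k has_real_derivative k' r) (at r)"
  shows "GDERIV (\<lambda>x. (u x)\<^sup>2 * k (norm x)) x :>
    (2 * u x * k (norm x)) *\<^sub>R g x + ((u x)\<^sup>2 * k' (norm x)) *\<^sub>R sgn x"
proof (cases "x = 0")
  case True
  then have "FDERIV (\<lambda>_. 0) x :>
      (\<lambda>v. v \<bullet> ((2 * u x * k (norm x)) *\<^sub>R g x + ((u x)\<^sup>2 * k' (norm x)) *\<^sub>R sgn x))"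
    using vanishes_in_ball radius_pos by simp
  then show ?thesis
    unfolding gderiv_def
    by (rule has_derivative_transform_within_open[where s = "ball 0 \<rho>"])
      (use True radius_pos vanishes_in_ball in auto)
next
  case False
  have "FDERIV (\<lambda>x. (u x)\<^sup>2) x :> (\<lambda>v. 2 * u x * (v \<bullet> g x))"
    using gderiv[of x] unfolding gderiv_def by (auto intro!: derivative_eq_intros)
  moreover have "FDERIV (\<lambda>x. k (norm x)) x :> (\<lambda>v. k' (norm x) * (v \<bullet> sgn x))"
    using has_derivative_compose[OF has_derivative_norm[OF False]
        k_deriv[unfolded has_field_derivative_def]] False
    by simp
  ultimately show ?thesis
    unfolding gderiv_def
    by (rule has_derivative_eq_rhs[OF has_derivative_mult])
      (simp add: fun_eq_iff inner_add_right algebra_simps inner_commute)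
qed

lemma continuous_on_square_mult_radial_gradient:
  fixes k k' :: "real \<Rightarrow> real"
  assumes "continuous_on {0<..} k" "continuous_on {0<..} k'"
  shows "continuous_on UNIV (\<lambda>x. (2 * u x * k (norm x)) *\<^sub>R g x + ((u x)\<^sup>2 * k' (norm x)) *\<^sub>R sgn x)"
    (is "continuous_on UNIV ?H")
proof -
  have "continuous_on (- {0}) (\<lambda>x. k (norm x))" "continuous_on (- {0}) (\<lambda>x. k' (norm x))"
    using assms by (simp_all add: continuous_on_compose_norm)
  then have "continuous_on (- {0}) ?H"
    by (intro continuous_intros continuous_on_subset[OF gradient_cont] continuous_on_subset[OF continuous])
      simp_all
  moreover have "continuous_on (ball 0 \<rho>) ?H"
    by (rule continuous_on_eq[of _ "\<lambda>_. 0"]) (auto simp: vanishes_in_ball)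
  ultimately have "continuous_on (- {0} \<union> ball 0 \<rho>) ?H"
    by (intro continuous_on_open_Un) auto
  then show ?thesis
    by (rule continuous_on_subset) (use radius_pos in auto)
qed

lemma integral_radial_by_parts:
  fixes \<phi> \<phi>' :: "real \<Rightarrow> real"
  assumes \<phi>_deriv: "\<And>r. 0 < r \<Longrightarrow> (\<phi> has_real_derivative \<phi>' r) (at r)"
    and \<phi>'_cont: "continuous_on {0<..} \<phi>'"
  shows "(\<integral>x. 2 * \<phi> (norm x) * u x * (g x \<bullet> x / norm x)
      + (\<phi>' (norm x) + (real DIM('a) - 1) * \<phi> (norm x) / norm x) * (u x)\<^sup>2 \<partial>lborel) = 0"
proof -
  obtain M where M: "0 < M" and annulus: "\<And>x. norm x < \<rho> \<or> M < norm x \<Longrightarrow> u x = 0 \<and> g x = 0"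
    using vanishes_outside_annulus by blast
  define k where "k r = \<phi> r / r" for r
  define k' where "k' r = \<phi>' r / r - \<phi> r / r\<^sup>2" for r
  have k_deriv: "(k has_real_derivative k' r) (at r)" if "0 < r" for r
    unfolding k_def k'_def using that
    by (auto intro!: derivative_eq_intros \<phi>_deriv simp: field_simps power2_eq_square)
  have "continuous_on {0<..} \<phi>"
    using \<phi>_deriv by (intro has_real_derivative_imp_continuous_on) simp
  then have k_cont: "continuous_on {0<..} k" "continuous_on {0<..} k'"
    unfolding k_def k'_def by (auto intro!: continuous_intros \<phi>'_cont)
  define h where "h x = (u x)\<^sup>2 * k (norm x)" for x
  define H where "H x = (2 * u x * k (norm x)) *\<^sub>R g x + ((u x)\<^sup>2 * k' (norm x)) *\<^sub>R sgn x" for x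
  have H_cont: "continuous_on UNIV H"
    unfolding H_def by (rule continuous_on_square_mult_radial_gradient[OF k_cont])
  have "GDERIV h x :> H x" for x
    unfolding h_def H_def by (rule gderiv_square_mult_radial[OF k_deriv])
  then have "integral UNIV (\<lambda>x. H x \<bullet> x) = - real DIM('a) * integral UNIV h"
    using integral_gradient_inner_self[OF _ H_cont M] annulus by (simp add: h_def)
  moreover have "integrable lborel (\<lambda>x. H x \<bullet> x)"
    by (intro integrable_if_vanishes_with continuous_on_subset[OF continuous_on_inner[OF H_cont continuous_on_id]])
      (auto simp: H_def)
  moreover have "integrable lborel h"
    unfolding h_def
    by (intro integrable_if_vanishes_with)
      (auto intro!: continuous_intros continuous_on_compose_norm k_cont continuous_on_subset[OF continuous])
  ultimately have "(\<integral>x. H x \<bullet> x + DIM('a) * h x \<partial>lborel) = 0"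
    by (simp add: integral_lborel)
  moreover have "H x \<bullet> x + DIM('a) * h x = 2 * \<phi> (norm x) * u x * (g x \<bullet> x / norm x)
      + (\<phi>' (norm x) + (real DIM('a) - 1) * \<phi> (norm x) / norm x) * (u x)\<^sup>2" for x
    using vanishes_in_ball[of 0] radius_pos
    by (cases "x = 0")
      (simp_all add: H_def h_def k_def k'_def inner_add_left sgn_div_norm dot_square_norm
        field_simps power2_eq_square)
  ultimately show ?thesis
    by simp
qed

lemma radial_hardy_inequality:
  fixes W W' F F' :: "real \<Rightarrow> real"
  assumes W_deriv: "\<And>r. 0 < r \<Longrightarrow> (W has_real_derivative W' r) (at r)"
    and W'_cont: "continuous_on {0<..} W'" and W_nonneg: "\<And>r. 0 < r \<Longrightarrow> 0 \<le> W r"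
    and F_deriv: "\<And>r. 0 < r \<Longrightarrow> (F has_real_derivative F' r) (at r)"
    and F'_cont: "continuous_on {0<..} F'"
  shows "(\<integral>x. ((F' (norm x) + (real DIM('a) - 1) * F (norm x) / norm x - (F (norm x))\<^sup>2) * W (norm x)
              + F (norm x) * W' (norm x)) * (u x)\<^sup>2 \<partial>lborel)
         \<le> (\<integral>x. (g x \<bullet> x / norm x)\<^sup>2 * W (norm x) \<partial>lborel)"
proof -
  have W_cont: "continuous_on {0<..} W"
    using W_deriv by (intro has_real_derivative_imp_continuous_on) simp
  have F_cont: "continuous_on {0<..} F"
    using F_deriv by (intro has_real_derivative_imp_continuous_on) simp
  note radial_cont = continuous_on_compose_norm[OF W_cont] continuous_on_compose_norm[OF W'_cont]
    continuous_on_compose_norm[OF F_cont] continuous_on_compose_norm[OF F'_cont]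
  define V where "V x = ((F' (norm x) + (real DIM('a) - 1) * F (norm x) / norm x - (F (norm x))\<^sup>2) * W (norm x)
      + F (norm x) * W' (norm x)) * (u x)\<^sup>2" for x
  define L where "L x = (g x \<bullet> x / norm x)\<^sup>2 * W (norm x)" for x
  define P where "P x = 2 * (F (norm x) * W (norm x)) * u x * (g x \<bullet> x / norm x)
      + ((F (norm x) * W' (norm x) + F' (norm x) * W (norm x))
        + (real DIM('a) - 1) * (F (norm x) * W (norm x)) / norm x) * (u x)\<^sup>2" for x
  have "integral\<^sup>L lborel P = 0"
    unfolding P_def using F_deriv W_deriv
    by (intro integral_radial_by_parts DERIV_mult') (auto intro!: continuous_intros F_cont W_cont F'_cont W'_cont)
  moreover have "V x \<le> L x + P x" for x
  proof (cases "x = 0")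
    case True
    then show ?thesis
      using vanishes_in_ball[of x] radius_pos by (simp add: V_def P_def L_def)
  next
    case False
    then show ?thesis
      unfolding V_def L_def P_def by (intro radial_square_completion W_nonneg) simp_all
  qed
  moreover have "integrable lborel V" "integrable lborel L" "integrable lborel P"
    unfolding V_def L_def P_def
    by (intro integrable_if_vanishes_with;
        auto intro!: continuous_intros radial_cont continuous_on_subset[OF continuous]
          continuous_on_subset[OF gradient_cont])+
  ultimately show ?thesis
    unfolding V_def[symmetric] L_def[symmetric] by (intro integral_le_of_le_plus_null)
qed

lemma integrable_radial_mult_square:
  fixes f :: "real \<Rightarrow> real"
  assumes "continuous_on {0<..} f"
  shows "integrable lborel (\<lambda>x. f (norm x) * (u x)\<^sup>2)"
  using assms
  by (intro integrable_if_vanishes_with)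
    (auto intro!: continuous_intros continuous_on_compose_norm continuous_on_subset[OF continuous])

lemma exponential_weight_hardy:
  fixes C e a :: real
  assumes "0 \<le> C"
  defines "W \<equiv> \<lambda>r. C * exp (e * r powr (a + 1))"
  shows "(real DIM('a) - 2)\<^sup>2 / 4 * (\<integral>x. (u x)\<^sup>2 / (norm x)\<^sup>2 * W (norm x) \<partial>lborel)
      + (e * (a + 1))\<^sup>2 / 4 * (\<integral>x. norm x powr (2 * a) * (u x)\<^sup>2 * W (norm x) \<partial>lborel)
      + e * (a + 1) * (real DIM('a) - 1 + a) / 2
          * (\<integral>x. norm x powr (a - 1) * (u x)\<^sup>2 * W (norm x) \<partial>lborel)
    \<le> (\<integral>x. (g x \<bullet> x / norm x)\<^sup>2 * W (norm x) \<partial>lborel)"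
proof -
  define N where "N = real DIM('a)"
  define \<alpha> where "\<alpha> = (N - 2) / 2"
  define \<beta> where "\<beta> = e * (a + 1) / 2"
  define F where "F r = \<alpha> / r + \<beta> * r powr a" for r
  define F' where "F' r = - \<alpha> / r\<^sup>2 + \<beta> * a * r powr (a - 1)" for r
  define W' where "W' r = W r * (2 * \<beta> * r powr a)" for r
  have W_deriv: "(W has_real_derivative W' r) (at r)" if "0 < r" for r
    using that unfolding W_def W'_def \<beta>_def
    by (auto intro!: derivative_eq_intros has_real_derivative_powr simp: algebra_simps)
  have F_deriv: "(F has_real_derivative F' r) (at r)" if "0 < r" for r
    using that unfolding F_def F'_def
    by (auto intro!: derivative_eq_intros has_real_derivative_powr simp: field_simps power2_eq_square)
  have "continuous_on {0<..} W'" "continuous_on {0<..} F'"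
    unfolding W'_def W_def F'_def by (auto intro!: continuous_intros)
  then have hardy: "(\<integral>x. ((F' (norm x) + (N - 1) * F (norm x) / norm x - (F (norm x))\<^sup>2) * W (norm x)
      + F (norm x) * W' (norm x)) * (u x)\<^sup>2 \<partial>lborel) \<le> (\<integral>x. (g x \<bullet> x / norm x)\<^sup>2 * W (norm x) \<partial>lborel)"
    using radial_hardy_inequality[OF W_deriv _ _ F_deriv] assms(1) by (simp add: W_def N_def)
  have potential: "((F' (norm x) + (N - 1) * F (norm x) / norm x - (F (norm x))\<^sup>2) * W (norm x)
        + F (norm x) * W' (norm x)) * (u x)\<^sup>2
      = (N - 2)\<^sup>2 / 4 * ((u x)\<^sup>2 / (norm x)\<^sup>2 * W (norm x))
        + (e * (a + 1))\<^sup>2 / 4 * (norm x powr (2 * a) * (u x)\<^sup>2 * W (norm x))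
        + e * (a + 1) * (N - 1 + a) / 2 * (norm x powr (a - 1) * (u x)\<^sup>2 * W (norm x))" for x
  proof (cases "x = 0")
    case True
    then show ?thesis
      using vanishes_in_ball radius_pos by simp
  next
    case False
    then have "0 < norm x"
      by simp
    have "((F' (norm x) + (N - 1) * F (norm x) / norm x - (F (norm x))\<^sup>2) * W (norm x)
        + F (norm x) * W' (norm x)) * (u x)\<^sup>2
      = (\<alpha>\<^sup>2 * (W (norm x) / (norm x)\<^sup>2) + \<beta>\<^sup>2 * (norm x powr (2 * a) * W (norm x))
        + \<beta> * (N - 1 + a) * (norm x powr (a - 1) * W (norm x))) * (u x)\<^sup>2"
      using power_ansatz_potential[OF \<open>0 < norm x\<close>, where n = N and a = a and \<beta> = \<beta> and w = "W (norm x)"]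
      unfolding F_def F'_def W'_def \<alpha>_def by simp
    then show ?thesis
      unfolding \<alpha>_def \<beta>_def by (simp add: power_divide algebra_simps)
  qed
  have "continuous_on {0<..} (\<lambda>r. W r / r\<^sup>2)" "continuous_on {0<..} (\<lambda>r. r powr c * W r)" for c
    unfolding W_def by (auto intro!: continuous_intros)
  from this[THEN integrable_radial_mult_square]
  have hardy_int: "integrable lborel (\<lambda>x. (u x)\<^sup>2 / (norm x)\<^sup>2 * W (norm x))"
    and powr_int: "integrable lborel (\<lambda>x. norm x powr c * (u x)\<^sup>2 * W (norm x))" for c
    by (simp_all add: ac_simps)
  show ?thesis
    using hardy unfolding potential
    by (simp only: N_def Bochner_Integration.integral_add Bochner_Integration.integrable_add
        integral_mult_right_zero integrable_mult_right hardy_int powr_int)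
qed

end

lemma continuous_gradient_if_Ck1:
  fixes u :: "'a::euclidean_space \<Rightarrow> real"
  assumes "Ck 1 u"
  obtains g where "continuous_on UNIV g" "\<And>x. GDERIV u x :> g x"
proof -
  have diff: "\<And>x. u differentiable (at x)"
    and partial_cont: "\<And>i. i \<in> Basis \<Longrightarrow> continuous_on UNIV (\<lambda>x. frechet_derivative u (at x) i)"
    using assms by auto
  define g where "g x = (\<Sum>i\<in>Basis. frechet_derivative u (at x) i *\<^sub>R i)" for x
  have "GDERIV u x :> g x" for x
  proof -
    have lin: "linear (frechet_derivative u (at x))"
      using diff[of x] frechet_derivative_works has_derivative_linear by blast
    have "frechet_derivative u (at x) v = v \<bullet> g x" for v
      using Linear_Algebra.linear_componentwise[OF lin, of v 1]
      unfolding g_def inner_sum_right inner_scaleR_right by (simp add: mult.commute)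
    then have "frechet_derivative u (at x) = (\<lambda>v. v \<bullet> g x)"
      by blast
    then show ?thesis
      using diff[of x] frechet_derivative_works unfolding gderiv_def by metis
  qed
  moreover have "continuous_on UNIV g"
    unfolding g_def by (auto intro!: continuous_intros partial_cont)
  ultimately show ?thesis
    using that by blast
qed

lemma radial_deriv_eq_inner:
  assumes "GDERIV u x :> D"
  shows "radial_deriv u x = D \<bullet> x / norm x"
  using frechet_derivative_at[OF assms[unfolded gderiv_def]]
  by (metis inner_commute inner_scaleR_left radial_deriv_def divide_inverse_commute)

lemma integral_model_weight_exponential_tail:
  fixes f :: "real ^ 'n \<Rightarrow> real"
  assumes "\<forall>r\<ge>R. \<psi> r = A * r * exp (b * r powr (a + 1))" and "0 < R"
    and "\<And>x. norm x < R \<Longrightarrow> f x = 0"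
  shows "(\<integral>x. f x * model_weight \<psi> x \<partial>lborel)
    = (\<integral>x. f x * (A ^ (CARD('n) - 1) * exp ((real CARD('n) - 1) * b * norm x powr (a + 1))) \<partial>lborel)"
proof (intro Bochner_Integration.integral_cong refl)
  fix x :: "real ^ 'n"
  show "f x * model_weight \<psi> x
    = f x * (A ^ (CARD('n) - 1) * exp ((real CARD('n) - 1) * b * norm x powr (a + 1)))"
  proof (cases "norm x < R")
    case True
    then show ?thesis
      using assms(3) by simp
  next
    case False
    then have "0 < norm x"
      using assms(2) by linarith
    then have "\<psi> (norm x) / norm x = A * exp (b * norm x powr (a + 1))"
      using assms(1) False by simp
    then have "model_weight \<psi> x = (A * exp (b * norm x powr (a + 1))) ^ (CARD('n) - 1)"
      by (simp add: model_weight_def)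
    also have "\<dots> = A ^ (CARD('n) - 1) * exp (real (CARD('n) - 1) * (b * norm x powr (a + 1)))"
      by (simp only: power_mult_distrib exp_of_nat_mult)
    finally show ?thesis
      by (simp add: of_nat_diff mult.assoc)
  qed
qed

theorem corollary3p2:
  fixes \<psi> :: "real \<Rightarrow> real" and u :: "real ^ 'n \<Rightarrow> real"
    and R A b a :: real
  assumes N3: "CARD('n) \<ge> 3"
    and psi_smooth: "\<exists>d. smooth_derivs_nonneg \<psi> d \<and> d 1 0 = 1 \<and> (\<forall>k. d (2 * k) 0 = 0)"
    and psi_nonneg: "\<forall>r\<ge>0. \<psi> r \<ge> 0"
    and psi_pos: "\<forall>r>0. \<psi> r > 0"
    and R: "R > 0" and A: "A > 0" and b: "b > 0" and a: "a \<ge> -1"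
    and psi_tail: "\<forall>r\<ge>R. \<psi> r = A * r * exp (b * r powr (a + 1))"
    and u_smooth: "smooth u"
    and u_cpt: "bounded {x. u x \<noteq> 0}"
    and u_supp: "\<forall>x. norm x < R \<longrightarrow> u x = 0"
  shows "(\<integral>x. (radial_deriv u x)\<^sup>2 * model_weight \<psi> x \<partial>lborel) \<ge>
      (real CARD('n) - 2)\<^sup>2 / 4 * (\<integral>x. (u x)\<^sup>2 / (norm x)\<^sup>2 * model_weight \<psi> x \<partial>lborel)
    + (a + 1)\<^sup>2 * b\<^sup>2 * (real CARD('n) - 1)\<^sup>2 / 4
        * (\<integral>x. norm x powr (2 * a) * (u x)\<^sup>2 * model_weight \<psi> x \<partial>lborel)
    + b * (a + 1) * (real CARD('n) - 1) * (real CARD('n) - 1 + a) / 2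
        * (\<integral>x. norm x powr (a - 1) * (u x)\<^sup>2 * model_weight \<psi> x \<partial>lborel)"
proof -
  obtain g where g_cont: "continuous_on UNIV g" and u_deriv: "\<And>x. GDERIV u x :> g x"
    using continuous_gradient_if_Ck1 u_smooth unfolding smooth_def by blast
  interpret C1_supported_off_ball u g R
    using g_cont u_deriv R u_supp u_cpt by unfold_locales auto
  obtain M where annulus: "\<And>x. norm x < R \<or> M < norm x \<Longrightarrow> u x = 0 \<and> g x = 0"
    using vanishes_outside_annulus by blast
  note weight = integral_model_weight_exponential_tail[OF psi_tail R]
  have radial_eq: "(\<integral>x. (radial_deriv u x)\<^sup>2 * model_weight \<psi> x \<partial>lborel)
      = (\<integral>x. (g x \<bullet> x / norm x)\<^sup>2 * (A ^ (CARD('n) - 1)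
          * exp ((real CARD('n) - 1) * b * norm x powr (a + 1))) \<partial>lborel)"
    by (subst weight) (simp_all add: radial_deriv_eq_inner[OF u_deriv] annulus)
  have hardy_eq: "(\<integral>x. (u x)\<^sup>2 / (norm x)\<^sup>2 * model_weight \<psi> x \<partial>lborel)
      = (\<integral>x. (u x)\<^sup>2 / (norm x)\<^sup>2 * (A ^ (CARD('n) - 1)
          * exp ((real CARD('n) - 1) * b * norm x powr (a + 1))) \<partial>lborel)"
    and powr_eq: "(\<integral>x. norm x powr c * (u x)\<^sup>2 * model_weight \<psi> x \<partial>lborel)
      = (\<integral>x. norm x powr c * (u x)\<^sup>2 * (A ^ (CARD('n) - 1)
          * exp ((real CARD('n) - 1) * b * norm x powr (a + 1))) \<partial>lborel)" for c
    by (rule weight, simp add: annulus)+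
  have coeff: "(a + 1)\<^sup>2 * b\<^sup>2 * (real CARD('n) - 1)\<^sup>2 = ((real CARD('n) - 1) * b * (a + 1))\<^sup>2"
    "b * (a + 1) * (real CARD('n) - 1) = (real CARD('n) - 1) * b * (a + 1)"
    by (simp_all add: power_mult_distrib)
  show ?thesis
    using exponential_weight_hardy[of "A ^ (CARD('n) - 1)" "(real CARD('n) - 1) * b" a] A
    unfolding radial_eq hardy_eq powr_eq coeff by simp
qed

end
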